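(* For every $0<\gamma<\frac12$, the function $m\mapsto F(m,\gamma)$ is strictly convex on the real interval $[2,\infty)$.
   Context: Logarithms base 2. For real $m\ge 2$ and $\gamma\in(0,\frac12)$, $$F(m,\gamma)=\min_{x\in(0,1)}\Big[\log\big((1+x)^m+(1-x)^m\big)-m\gamma\log x-1\Big].$$ *)

theory Defs
  imports "HOL-Analysis.Analysis"
begin

definition strictly_convex_on :: "real set \<Rightarrow> (real \<Rightarrow> real) \<Rightarrow> bool" where
  "strictly_convex_on S f \<longleftrightarrow> convex S \<and>
    (\<forall>x\<in>S. \<forall>y\<in>S. \<forall>u::real. x \<noteq> y \<and> 0 < u \<and> u < 1 \<longrightarrow>
       f (u * x + (1 - u) * y) < u * f x + (1 - u) * f y)"

definition Fobj :: "real \<Rightarrow> real \<Rightarrow> real \<Rightarrow> real" where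
  "Fobj m \<gamma> x = log 2 ((1 + x) powr m + (1 - x) powr m) - m * \<gamma> * log 2 x - 1"

text \<open>F(m,gamma) = min over x in (0,1) of the objective (taken as an infimum).\<close>
definition F :: "real \<Rightarrow> real \<Rightarrow> real" where
  "F m \<gamma> = (INF x\<in>{0<..<1}. Fobj m \<gamma> x)"

end

theory Submission
  imports Defs
begin

text \<open>
  Writing \<open>x = exp (v / m)\<close> turns the objective into \<open>(G m v - \<gamma> * v) / ln 2 - 1\<close>, where
  \<open>G m v = ln ((1 + e^(v/m))^m + (1 - e^(v/m))^m)\<close> is the log-sum-exp of the perspectives of
  \<open>t \<mapsto> ln (1 + e^t)\<close> and \<open>t \<mapsto> ln (1 - e^t)\<close>. For \<open>m \<ge> 2\<close> and \<open>\<gamma> < 1/2\<close> the infimum over \<open>x\<close>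
  is attained inside \<open>(0, 1)\<close>: the objective blows up as \<open>x \<rightarrow> 0\<close> and is increasing once
  \<open>\<gamma> * (1 + x^2) < x^2\<close>. So \<open>\<lambda>m. F m \<gamma>\<close> is a partial minimum over \<open>v\<close>, and it suffices that \<open>G\<close> is
  strictly convex along every segment on which \<open>m\<close> is not constant.

  Along a segment, \<open>ln (e^p + e^q)\<close> has second derivative
  \<open>((e^p p'' + e^q q'') (e^p + e^q) + e^p e^q (p' - q')^2) / (e^p + e^q)^2\<close>, and the perspective
  \<open>M h (V / M)\<close> of \<open>h\<close> has second derivative \<open>h''(t) (b - a t)^2 / M\<close> with \<open>t = V / M\<close>. Hence
  \<open>e^p p'' + e^q q''\<close> is a nonnegative multiple of \<open>(1 + e^t)^(M-2) - (1 - e^t)^(M-2)\<close>, which is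
  positive because \<open>M > 2\<close> inside a segment with \<open>m\<^sub>1 \<noteq> m\<^sub>2\<close>; where that multiple vanishes, i.e.
  \<open>b = a t\<close>, the term \<open>(p' - q')^2 = a^2 (ln (1 + e^t) - ln (1 - e^t))^2\<close> is positive instead.
\<close>

section \<open>Calculus and convexity\<close>

lemma powr_split_two:
  fixes y m :: real
  assumes "0 < y"
  shows "y powr (m - 1) = y powr (m - 2) * y" "y powr m = y powr (m - 2) * y\<^sup>2"
proof -
  have "y powr (m - 1) = y powr ((m - 2) + 1)" by simp
  then show "y powr (m - 1) = y powr (m - 2) * y"
    using assms by (simp only: powr_add powr_one)
  have "y powr m = y powr ((m - 2) + 2)" by simp
  then show "y powr m = y powr (m - 2) * y\<^sup>2"
    using assms by (simp only: powr_add[of y "m - 2" 2] powr_numeral)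
qed

lemma strict_chord_of_deriv2_pos:
  fixes f f' f'' :: "real \<Rightarrow> real"
  assumes "x < y" "0 < c" "c < 1"
    and f': "\<And>t. t \<in> {x..y} \<Longrightarrow> (f has_real_derivative f' t) (at t)"
    and f'': "\<And>t. t \<in> {x<..<y} \<Longrightarrow> (f' has_real_derivative f'' t) (at t)"
    and pos: "\<And>t. t \<in> {x<..<y} \<Longrightarrow> 0 < f'' t"
  shows "f ((1 - c) * x + c * y) < (1 - c) * f x + c * f y"
proof -
  define z where "z = (1 - c) * x + c * y"
  have gaps: "z - x = c * (y - x)" "y - z = (1 - c) * (y - x)"
    by (simp_all add: z_def algebra_simps)
  then have z: "x < z" "z < y"
    using assms by (smt (verit) mult_pos_pos)+
  obtain s where s: "x < s" "s < z" "f z - f x = (z - x) * f' s"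
    using MVT2[OF \<open>x < z\<close>, of f f'] f' z by auto
  obtain t where t: "z < t" "t < y" "f y - f z = (y - z) * f' t"
    using MVT2[OF \<open>z < y\<close>, of f f'] f' z by auto
  have "f' s < f' t"
  proof (rule DERIV_pos_imp_increasing[of s t f'])
    fix r assume "s \<le> r" "r \<le> t"
    then have "r \<in> {x<..<y}"
      using s t z by auto
    then show "\<exists>D. (f' has_real_derivative D) (at r) \<and> 0 < D"
      using f'' pos by blast
  qed (use s t z in auto)
  moreover have "0 < c * (1 - c) * (y - x)"
    using assms by simp
  ultimately have "c * (1 - c) * (y - x) * f' s < c * (1 - c) * (y - x) * f' t"
    by (rule mult_strict_left_mono)
  moreover have "(1 - c) * (f z - f x) = c * (1 - c) * (y - x) * f' s"
    "c * (f y - f z) = c * (1 - c) * (y - x) * f' t"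
    by (simp_all only: s(3) t(3) gaps mult_ac)
  ultimately have "(1 - c) * (f z - f x) < c * (f y - f z)"
    by linarith
  then have "f z < (1 - c) * f x + c * f y"
    by (simp add: algebra_simps)
  then show ?thesis
    by (simp only: z_def)
qed

lemma strictly_convex_on_partial_minimization:
  fixes \<Phi> :: "real \<Rightarrow> real" and g :: "real \<Rightarrow> real \<Rightarrow> real"
  assumes "convex S" "convex V"
    and attained: "\<And>m. m \<in> S \<Longrightarrow> \<exists>v\<in>V. \<Phi> m = g m v"
    and lower: "\<And>m v. m \<in> S \<Longrightarrow> v \<in> V \<Longrightarrow> \<Phi> m \<le> g m v"
    and strict: "\<And>m1 m2 v1 v2 u. m1 \<in> S \<Longrightarrow> m2 \<in> S \<Longrightarrow> v1 \<in> V \<Longrightarrow> v2 \<in> V \<Longrightarrow>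
      m1 \<noteq> m2 \<Longrightarrow> 0 < u \<Longrightarrow> u < 1 \<Longrightarrow>
      g (u * m1 + (1 - u) * m2) (u * v1 + (1 - u) * v2) < u * g m1 v1 + (1 - u) * g m2 v2"
  shows "strictly_convex_on S \<Phi>"
  unfolding strictly_convex_on_def
proof (intro conjI ballI allI impI)
  fix m1 m2 u :: real
  assume m: "m1 \<in> S" "m2 \<in> S" and u: "m1 \<noteq> m2 \<and> 0 < u \<and> u < 1"
  obtain v1 v2 where v: "v1 \<in> V" "v2 \<in> V" "\<Phi> m1 = g m1 v1" "\<Phi> m2 = g m2 v2"
    using attained m by meson
  have "u * m1 + (1 - u) * m2 \<in> S" "u * v1 + (1 - u) * v2 \<in> V"
    using convexD[OF \<open>convex S\<close> m, of u "1 - u"] convexD[OF \<open>convex V\<close> v(1,2), of u "1 - u"] u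
    by simp_all
  then have "\<Phi> (u * m1 + (1 - u) * m2) \<le> g (u * m1 + (1 - u) * m2) (u * v1 + (1 - u) * v2)"
    by (rule lower)
  also have "\<dots> < u * \<Phi> m1 + (1 - u) * \<Phi> m2"
    unfolding v(3,4) using strict m v u by blast
  finally show "\<Phi> (u * m1 + (1 - u) * m2) < u * \<Phi> m1 + (1 - u) * \<Phi> m2" .
qed (rule \<open>convex S\<close>)

section \<open>Log-sum-exp of two perspectives\<close>

lemma logsumexp_has_real_derivative:
  assumes "(p has_real_derivative p') (at x)" "(q has_real_derivative q') (at x)"
  shows "((\<lambda>x. ln (exp (p x) + exp (q x))) has_real_derivative
    (exp (p x) * p' + exp (q x) * q') / (exp (p x) + exp (q x))) (at x)"
  using assms by (auto intro!: derivative_eq_intros add_pos_pos)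

lemma logsumexp_derivative_has_real_derivative:
  assumes "(p has_real_derivative p1 x) (at x)" "(q has_real_derivative q1 x) (at x)"
    and "(p1 has_real_derivative p2) (at x)" "(q1 has_real_derivative q2) (at x)"
  shows "((\<lambda>x. (exp (p x) * p1 x + exp (q x) * q1 x) / (exp (p x) + exp (q x))) has_real_derivative
    ((exp (p x) * p2 + exp (q x) * q2) * (exp (p x) + exp (q x)) + exp (p x) * exp (q x) * (p1 x - q1 x)\<^sup>2)
      / (exp (p x) + exp (q x))\<^sup>2) (at x)"
proof -
  have "exp (p x) + exp (q x) \<noteq> 0"
    by (smt (verit) exp_gt_zero)
  then show ?thesis
    using assms by (auto intro!: derivative_eq_intros simp: field_simps power2_eq_square)
qed

lemma logsumexp_second_derivative_pos:
  fixes P Q p1 q1 p2 q2 :: real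
  assumes "0 \<le> exp P * p2 + exp Q * q2" "0 < exp P * p2 + exp Q * q2 \<or> p1 \<noteq> q1"
  shows "0 < ((exp P * p2 + exp Q * q2) * (exp P + exp Q) + exp P * exp Q * (p1 - q1)\<^sup>2)
    / (exp P + exp Q)\<^sup>2"
proof -
  have "0 < exp P + exp Q" "0 < exp P * exp Q"
    by (simp_all add: add_pos_pos)
  then have "0 < (exp P * p2 + exp Q * q2) * (exp P + exp Q) + exp P * exp Q * (p1 - q1)\<^sup>2"
    using assms by (auto intro: add_pos_nonneg add_nonneg_pos)
  moreover have "0 < (exp P + exp Q)\<^sup>2"
    using add_pos_pos[OF exp_gt_zero exp_gt_zero, of P Q] by simp
  ultimately show ?thesis
    by (rule divide_pos_pos)
qed

lemma logsumexp_strict_chord: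
  fixes p q p1 q1 p2 q2 :: "real \<Rightarrow> real"
  assumes c: "0 < c" "c < 1"
    and p: "\<And>\<tau>. \<tau> \<in> {0..1} \<Longrightarrow> (p has_real_derivative p1 \<tau>) (at \<tau>)"
    and q: "\<And>\<tau>. \<tau> \<in> {0..1} \<Longrightarrow> (q has_real_derivative q1 \<tau>) (at \<tau>)"
    and p1: "\<And>\<tau>. \<tau> \<in> {0<..<1} \<Longrightarrow> (p1 has_real_derivative p2 \<tau>) (at \<tau>)"
    and q1: "\<And>\<tau>. \<tau> \<in> {0<..<1} \<Longrightarrow> (q1 has_real_derivative q2 \<tau>) (at \<tau>)"
    and nonneg: "\<And>\<tau>. \<tau> \<in> {0<..<1} \<Longrightarrow> 0 \<le> exp (p \<tau>) * p2 \<tau> + exp (q \<tau>) * q2 \<tau>"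
    and strict: "\<And>\<tau>. \<tau> \<in> {0<..<1} \<Longrightarrow> 0 < exp (p \<tau>) * p2 \<tau> + exp (q \<tau>) * q2 \<tau> \<or> p1 \<tau> \<noteq> q1 \<tau>"
  shows "ln (exp (p c) + exp (q c))
    < (1 - c) * ln (exp (p 0) + exp (q 0)) + c * ln (exp (p 1) + exp (q 1))"
proof -
  define f1 where "f1 \<tau> = (exp (p \<tau>) * p1 \<tau> + exp (q \<tau>) * q1 \<tau>) / (exp (p \<tau>) + exp (q \<tau>))" for \<tau>
  define f2 where "f2 \<tau> = ((exp (p \<tau>) * p2 \<tau> + exp (q \<tau>) * q2 \<tau>) * (exp (p \<tau>) + exp (q \<tau>))
      + exp (p \<tau>) * exp (q \<tau>) * (p1 \<tau> - q1 \<tau>)\<^sup>2) / (exp (p \<tau>) + exp (q \<tau>))\<^sup>2" for \<tau>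
  have "(\<lambda>\<tau>. ln (exp (p \<tau>) + exp (q \<tau>))) ((1 - c) * 0 + c * 1)
      < (1 - c) * ln (exp (p 0) + exp (q 0)) + c * ln (exp (p 1) + exp (q 1))"
  proof (rule strict_chord_of_deriv2_pos[where f' = f1 and f'' = f2])
    fix \<tau> :: real
    assume "\<tau> \<in> {0..1}"
    then show "((\<lambda>\<tau>. ln (exp (p \<tau>) + exp (q \<tau>))) has_real_derivative f1 \<tau>) (at \<tau>)"
      unfolding f1_def using p q by (intro logsumexp_has_real_derivative)
  next
    fix \<tau> :: real
    assume "\<tau> \<in> {0<..<1}"
    then show "(f1 has_real_derivative f2 \<tau>) (at \<tau>)"
      unfolding f1_def[abs_def] f2_def using p q p1 q1
      by (auto intro!: logsumexp_derivative_has_real_derivative)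
    show "0 < f2 \<tau>"
      unfolding f2_def using nonneg strict \<open>\<tau> \<in> {0<..<1}\<close>
      by (intro logsumexp_second_derivative_pos) auto
  qed (use c in auto)
  then show ?thesis
    by simp
qed

definition perspective :: "(real \<Rightarrow> real) \<Rightarrow> real \<Rightarrow> real \<Rightarrow> real" where
  "perspective h m v = m * h (v / m)"

text \<open>The derivative of \<open>perspective h\<close> at \<open>(m, v)\<close> in direction \<open>(a, b)\<close>, where \<open>h'\<close> is the derivative of \<open>h\<close>.\<close>

definition perspective_deriv ::
    "(real \<Rightarrow> real) \<Rightarrow> (real \<Rightarrow> real) \<Rightarrow> real \<Rightarrow> real \<Rightarrow> real \<Rightarrow> real \<Rightarrow> real" where
  "perspective_deriv h h' m v a b = a * h (v / m) + (b - a * (v / m)) * h' (v / m)"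

lemma line_slope_has_real_derivative:
  assumes "m + \<tau> * a \<noteq> 0"
  shows "((\<lambda>\<tau>. (v + \<tau> * b) / (m + \<tau> * a)) has_real_derivative
    (b - a * ((v + \<tau> * b) / (m + \<tau> * a))) / (m + \<tau> * a)) (at \<tau>)"
  using assms by (auto intro!: derivative_eq_intros simp: field_simps power2_eq_square)

lemma perspective_line_has_real_derivative:
  fixes h h' :: "real \<Rightarrow> real"
  assumes M: "m + \<tau> * a \<noteq> 0" and t: "t = (v + \<tau> * b) / (m + \<tau> * a)"
    and h: "(h has_real_derivative h' t) (at t)"
  shows "((\<lambda>\<tau>. perspective h (m + \<tau> * a) (v + \<tau> * b)) has_real_derivative
    perspective_deriv h h' (m + \<tau> * a) (v + \<tau> * b) a b) (at \<tau>)"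
proof -
  have "((\<lambda>\<tau>. h ((v + \<tau> * b) / (m + \<tau> * a))) has_real_derivative
      h' t * ((b - a * t) / (m + \<tau> * a))) (at \<tau>)"
    using DERIV_chain2[OF h[unfolded t] line_slope_has_real_derivative[OF M]] t by simp
  then show ?thesis
    unfolding perspective_def perspective_deriv_def using M t by (auto intro!: derivative_eq_intros)
qed

lemma perspective_deriv_line_has_real_derivative:
  fixes h h' :: "real \<Rightarrow> real"
  assumes M: "m + \<tau> * a \<noteq> 0" and t: "t = (v + \<tau> * b) / (m + \<tau> * a)"
    and h: "(h has_real_derivative h' t) (at t)" and h': "(h' has_real_derivative h'') (at t)"
  shows "((\<lambda>\<tau>. perspective_deriv h h' (m + \<tau> * a) (v + \<tau> * b) a b) has_real_derivative
    h'' * (b - a * t)\<^sup>2 / (m + \<tau> * a)) (at \<tau>)"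
proof -
  define D where "D = (b - a * t) / (m + \<tau> * a)"
  have slope: "((\<lambda>\<tau>. (v + \<tau> * b) / (m + \<tau> * a)) has_real_derivative D) (at \<tau>)"
    using line_slope_has_real_derivative[OF M, of v b] t by (simp add: D_def)
  have dh: "((\<lambda>\<tau>. h ((v + \<tau> * b) / (m + \<tau> * a))) has_real_derivative h' t * D) (at \<tau>)"
    using DERIV_chain2[OF h[unfolded t] slope] t by simp
  have dh': "((\<lambda>\<tau>. h' ((v + \<tau> * b) / (m + \<tau> * a))) has_real_derivative h'' * D) (at \<tau>)"
    using DERIV_chain2[OF h'[unfolded t] slope] t by simp
  have "a * (h' t * D) + ((0 - a * D) * h' t + h'' * D * (b - a * t))
      = h'' * (b - a * t)\<^sup>2 / (m + \<tau> * a)"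
    by (simp add: D_def power2_eq_square algebra_simps)
  with DERIV_add[OF DERIV_cmult[OF dh, of a]
        DERIV_mult[OF DERIV_diff[OF DERIV_const[of b] DERIV_cmult[OF slope, of a]] dh'],
        unfolded t[symmetric]]
  show ?thesis
    unfolding perspective_deriv_def by (rule DERIV_cong)
qed

definition log1pexp :: "real \<Rightarrow> real" where
  "log1pexp t = ln (1 + exp t)"

definition log1mexp :: "real \<Rightarrow> real" where
  "log1mexp t = ln (1 - exp t)"

lemma log1pexp_has_real_derivative:
  "(log1pexp has_real_derivative exp t / (1 + exp t)) (at t)"
  unfolding log1pexp_def[abs_def] by (auto intro!: derivative_eq_intros add_pos_pos)

lemma log1pexp_derivative_has_real_derivative:
  "((\<lambda>t. exp t / (1 + exp t)) has_real_derivative exp t / (1 + exp t)\<^sup>2) (at t)"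
proof -
  have "1 + exp t \<noteq> 0"
    by (smt (verit) exp_gt_zero)
  then show ?thesis
    by (auto intro!: derivative_eq_intros simp: field_simps power2_eq_square)
qed

lemma log1mexp_has_real_derivative:
  "t < 0 \<Longrightarrow> (log1mexp has_real_derivative - (exp t / (1 - exp t))) (at t)"
  unfolding log1mexp_def[abs_def] by (auto intro!: derivative_eq_intros)

lemma log1mexp_derivative_has_real_derivative:
  "t < 0 \<Longrightarrow> ((\<lambda>t. - (exp t / (1 - exp t))) has_real_derivative - (exp t / (1 - exp t)\<^sup>2)) (at t)"
  by (auto intro!: derivative_eq_intros simp: field_simps power2_eq_square)

definition perspective_lse :: "real \<Rightarrow> real \<Rightarrow> real" where
  "perspective_lse m v = ln (exp (perspective log1pexp m v) + exp (perspective log1mexp m v))"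

lemma exp_perspective_log1pexp: "exp (perspective log1pexp m v) = (1 + exp (v / m)) powr m"
proof -
  have "1 + exp (v / m) \<noteq> 0"
    by (smt (verit) exp_gt_zero)
  then show ?thesis
    by (simp add: perspective_def log1pexp_def powr_def)
qed

lemma exp_perspective_log1mexp: "v / m < 0 \<Longrightarrow> exp (perspective log1mexp m v) = (1 - exp (v / m)) powr m"
  by (auto simp: perspective_def log1mexp_def powr_def)

lemma log1mexp_less_log1pexp: "t < 0 \<Longrightarrow> log1mexp t < log1pexp t"
  unfolding log1mexp_def log1pexp_def by (simp add: add_pos_pos)

lemma perspective_lse_curvature:
  fixes m v a b :: real
  assumes "2 < m" "v / m < 0"
  defines "W \<equiv> exp (perspective log1pexp m v) * (exp (v / m) / (1 + exp (v / m))\<^sup>2 * (b - a * (v / m))\<^sup>2 / m)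
    + exp (perspective log1mexp m v) * (- (exp (v / m) / (1 - exp (v / m))\<^sup>2) * (b - a * (v / m))\<^sup>2 / m)"
  shows "0 \<le> W" and "b \<noteq> a * (v / m) \<Longrightarrow> 0 < W"
proof -
  define E where "E = exp (v / m)"
  have E: "0 < E" "E < 1" "0 < 1 + E"
    using assms by (auto simp: E_def add_pos_pos)
  have gap: "0 < (1 + E) powr (m - 2) - (1 - E) powr (m - 2)"
    using assms E by (simp add: powr_less_mono2)
  have "W = (b - a * (v / m))\<^sup>2 / m * E * ((1 + E) powr (m - 2) - (1 - E) powr (m - 2))"
    using E assms powr_split_two[of "1 + E" m] powr_split_two[of "1 - E" m]
    by (simp add: W_def exp_perspective_log1pexp exp_perspective_log1mexp E_def[symmetric] field_simps)
  then show "0 \<le> W" "b \<noteq> a * (v / m) \<Longrightarrow> 0 < W"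
    using gap assms E by simp_all
qed

lemma perspective_deriv_log1pexp_neq_log1mexp:
  assumes "v / m < 0" "a \<noteq> 0" "b = a * (v / m)"
  shows "perspective_deriv log1pexp (\<lambda>t. exp t / (1 + exp t)) m v a b
    \<noteq> perspective_deriv log1mexp (\<lambda>t. - (exp t / (1 - exp t))) m v a b"
  using log1mexp_less_log1pexp[OF assms(1)] assms by (simp add: perspective_deriv_def)

lemma perspective_log1pexp_log1mexp_line_derivatives:
  fixes m a v b \<tau> :: real
  assumes M: "m + \<tau> * a \<noteq> 0" and t: "t = (v + \<tau> * b) / (m + \<tau> * a)" "t < 0"
  shows "((\<lambda>\<tau>. perspective log1pexp (m + \<tau> * a) (v + \<tau> * b)) has_real_derivative
      perspective_deriv log1pexp (\<lambda>t. exp t / (1 + exp t)) (m + \<tau> * a) (v + \<tau> * b) a b) (at \<tau>)"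
    and "((\<lambda>\<tau>. perspective log1mexp (m + \<tau> * a) (v + \<tau> * b)) has_real_derivative
      perspective_deriv log1mexp (\<lambda>t. - (exp t / (1 - exp t))) (m + \<tau> * a) (v + \<tau> * b) a b) (at \<tau>)"
    and "((\<lambda>\<tau>. perspective_deriv log1pexp (\<lambda>t. exp t / (1 + exp t)) (m + \<tau> * a) (v + \<tau> * b) a b)
      has_real_derivative exp t / (1 + exp t)\<^sup>2 * (b - a * t)\<^sup>2 / (m + \<tau> * a)) (at \<tau>)"
    and "((\<lambda>\<tau>. perspective_deriv log1mexp (\<lambda>t. - (exp t / (1 - exp t))) (m + \<tau> * a) (v + \<tau> * b) a b)
      has_real_derivative - (exp t / (1 - exp t)\<^sup>2) * (b - a * t)\<^sup>2 / (m + \<tau> * a)) (at \<tau>)"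
  using perspective_line_has_real_derivative[where h' = "\<lambda>t. exp t / (1 + exp t)",
      OF M t(1) log1pexp_has_real_derivative]
    perspective_line_has_real_derivative[where h' = "\<lambda>t. - (exp t / (1 - exp t))",
      OF M t(1) log1mexp_has_real_derivative[OF t(2)]]
    perspective_deriv_line_has_real_derivative[where h' = "\<lambda>t. exp t / (1 + exp t)",
      OF M t(1) log1pexp_has_real_derivative log1pexp_derivative_has_real_derivative]
    perspective_deriv_line_has_real_derivative[where h' = "\<lambda>t. - (exp t / (1 - exp t))",
      OF M t(1) log1mexp_has_real_derivative[OF t(2)] log1mexp_derivative_has_real_derivative[OF t(2)]]
  by simp_all

lemma line_point_between:
  fixes m a \<tau> :: real
  assumes "\<tau> \<in> {0..1}"
  shows "min m (m + a) \<le> m + \<tau> * a" "m + \<tau> * a \<le> max m (m + a)"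
proof -
  have "min 0 a \<le> \<tau> * a \<and> \<tau> * a \<le> max 0 a"
    using assms by (cases "0 \<le> a") (auto intro: mult_left_le_one_le mult_nonneg_nonpos simp: mult_le_0_iff)
  then show "min m (m + a) \<le> m + \<tau> * a" "m + \<tau> * a \<le> max m (m + a)"
    by (auto simp: min_def max_def)
qed

lemma line_point_above_min:
  fixes m a \<tau> :: real
  assumes "\<tau> \<in> {0<..<1}" "a \<noteq> 0"
  shows "min m (m + a) < m + \<tau> * a"
proof (cases "0 < a")
  case True
  then show ?thesis
    using assms by (simp add: min_def)
next
  case False
  then have "a < \<tau> * a"
    using assms by (simp add: mult_less_cancel_right2)
  then show ?thesis
    by (simp add: min_def)
qed

lemma perspective_lse_line_strict_chord:
  fixes m a v b c :: real
  assumes m: "2 \<le> m" "2 \<le> m + a" and a: "a \<noteq> 0" and v: "v < 0" "v + b < 0"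
    and c: "0 < c" "c < 1"
  shows "perspective_lse (m + c * a) (v + c * b)
    < (1 - c) * perspective_lse m v + c * perspective_lse (m + a) (v + b)"
proof -
  define T where "T \<tau> = (v + \<tau> * b) / (m + \<tau> * a)" for \<tau>
  have M: "2 \<le> m + \<tau> * a" and T: "T \<tau> < 0" if "\<tau> \<in> {0..1}" for \<tau>
  proof -
    show "2 \<le> m + \<tau> * a"
      using line_point_between(1)[OF that, of m a] m by linarith
    moreover have "v + \<tau> * b < 0"
      using line_point_between(2)[OF that, of v b] v by linarith
    ultimately show "T \<tau> < 0"
      by (simp add: T_def divide_neg_pos)
  qed
  have M_interior: "2 < m + \<tau> * a" if "\<tau> \<in> {0<..<1}" for \<tau>
    using line_point_above_min[OF that a, of m] m by linarith
  define p where "p \<tau> = perspective log1pexp (m + \<tau> * a) (v + \<tau> * b)" for \<tau>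
  define q where "q \<tau> = perspective log1mexp (m + \<tau> * a) (v + \<tau> * b)" for \<tau>
  define p1 where "p1 \<tau> = perspective_deriv log1pexp (\<lambda>t. exp t / (1 + exp t)) (m + \<tau> * a) (v + \<tau> * b) a b" for \<tau>
  define q1 where "q1 \<tau> = perspective_deriv log1mexp (\<lambda>t. - (exp t / (1 - exp t))) (m + \<tau> * a) (v + \<tau> * b) a b" for \<tau>
  define p2 where "p2 \<tau> = exp (T \<tau>) / (1 + exp (T \<tau>))\<^sup>2 * (b - a * T \<tau>)\<^sup>2 / (m + \<tau> * a)" for \<tau>
  define q2 where "q2 \<tau> = - (exp (T \<tau>) / (1 - exp (T \<tau>))\<^sup>2) * (b - a * T \<tau>)\<^sup>2 / (m + \<tau> * a)" for \<tau>
  have "ln (exp (p c) + exp (q c)) < (1 - c) * ln (exp (p 0) + exp (q 0)) + c * ln (exp (p 1) + exp (q 1))"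
  proof (rule logsumexp_strict_chord[OF c])
    fix \<tau> :: real
    assume "\<tau> \<in> {0..1}"
    then have "m + \<tau> * a \<noteq> 0" "T \<tau> < 0"
      using M T by force+
    from perspective_log1pexp_log1mexp_line_derivatives[OF this(1) T_def this(2)]
    show "(p has_real_derivative p1 \<tau>) (at \<tau>)" "(q has_real_derivative q1 \<tau>) (at \<tau>)"
      unfolding p_def[abs_def] q_def[abs_def] p1_def q1_def by simp_all
  next
    fix \<tau> :: real
    assume \<tau>: "\<tau> \<in> {0<..<1}"
    then have "m + \<tau> * a \<noteq> 0" and t: "T \<tau> < 0"
      using M[of \<tau>] T[of \<tau>] by auto
    from perspective_log1pexp_log1mexp_line_derivatives[OF this(1) T_def t]
    show "(p1 has_real_derivative p2 \<tau>) (at \<tau>)" "(q1 has_real_derivative q2 \<tau>) (at \<tau>)"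
      unfolding p1_def[abs_def] q1_def[abs_def] p2_def q2_def by simp_all
    have V: "(v + \<tau> * b) / (m + \<tau> * a) < 0"
      using t by (simp add: T_def)
    note curvature = perspective_lse_curvature[OF M_interior[OF \<tau>] V, of b a]
    show "0 \<le> exp (p \<tau>) * p2 \<tau> + exp (q \<tau>) * q2 \<tau>"
      using curvature(1) by (simp add: p_def q_def p2_def q2_def T_def)
    show "0 < exp (p \<tau>) * p2 \<tau> + exp (q \<tau>) * q2 \<tau> \<or> p1 \<tau> \<noteq> q1 \<tau>"
    proof (cases "b = a * T \<tau>")
      case True
      then have "p1 \<tau> \<noteq> q1 \<tau>"
        using perspective_deriv_log1pexp_neq_log1mexp[OF V a] by (simp add: p1_def q1_def T_def)
      then show ?thesis ..
    next
      case False
      then have "0 < exp (p \<tau>) * p2 \<tau> + exp (q \<tau>) * q2 \<tau>"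
        using curvature(2) by (simp add: p_def q_def p2_def q2_def T_def)
      then show ?thesis ..
    qed
  qed
  then show ?thesis
    by (simp add: p_def q_def perspective_lse_def)
qed

section \<open>The objective\<close>

lemma Fobj_has_real_derivative:
  assumes "0 < x" "x < 1"
  shows "(Fobj m \<gamma> has_real_derivative
    (m * ((1 + x) powr (m - 1) - (1 - x) powr (m - 1)) / ((1 + x) powr m + (1 - x) powr m)
      - m * \<gamma> / x) / ln 2) (at x)"
proof -
  have "0 < (1 + x) powr m + (1 - x) powr m"
    using assms by (intro add_pos_nonneg) auto
  then have d: "((\<lambda>x. ln ((1 + x) powr m + (1 - x) powr m) - m * \<gamma> * ln x) has_real_derivative
    m * ((1 + x) powr (m - 1) - (1 - x) powr (m - 1)) / ((1 + x) powr m + (1 - x) powr m)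
      - m * \<gamma> / x) (at x)"
    using assms by (auto intro!: derivative_eq_intros simp: field_simps)
  have e: "Fobj m \<gamma> = (\<lambda>x. (ln ((1 + x) powr m + (1 - x) powr m) - m * \<gamma> * ln x) / ln 2 - 1)"
    by (simp add: fun_eq_iff Fobj_def log_def diff_divide_distrib)
  show ?thesis
    unfolding e using DERIV_diff[OF DERIV_cdivide[OF d, of "ln 2"] DERIV_const[of 1]] by simp
qed

lemma Fobj_deriv_pos:
  fixes x m \<gamma> :: real
  assumes "0 < x" "x < 1" "2 \<le> m" "0 < \<gamma>" "\<gamma> * (1 + x\<^sup>2) < x\<^sup>2"
  shows "0 < (m * ((1 + x) powr (m - 1) - (1 - x) powr (m - 1)) / ((1 + x) powr m + (1 - x) powr m)
      - m * \<gamma> / x) / ln 2"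
proof -
  define A where "A = (1 + x) powr (m - 2)"
  define B where "B = (1 - x) powr (m - 2)"
  have "B \<le> A" "0 < A" "0 \<le> B"
    unfolding A_def B_def using assms by (auto intro: powr_mono2)
  define N where "N = A * (1 + x) - B * (1 - x)"
  define D where "D = A * (1 + x)\<^sup>2 + B * (1 - x)\<^sup>2"
  have "B * (x * (1 - x) + \<gamma> * (1 - x)\<^sup>2) \<le> A * (x * (1 - x) + \<gamma> * (1 - x)\<^sup>2)"
    using \<open>B \<le> A\<close> assms by (intro mult_right_mono) auto
  moreover have "A * (x * (1 - x) + \<gamma> * (1 - x)\<^sup>2) < A * (x * (1 + x) - \<gamma> * (1 + x)\<^sup>2)"
    using \<open>0 < A\<close> assms by (intro mult_strict_left_mono) (auto simp: power2_eq_square algebra_simps)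
  ultimately have "\<gamma> * D < x * N"
    unfolding D_def N_def by (simp add: algebra_simps)
  moreover have "0 < D"
    unfolding D_def using \<open>0 < A\<close> \<open>0 \<le> B\<close> assms by (intro add_pos_nonneg) auto
  ultimately have "\<gamma> * D / (x * D) < x * N / (x * D)"
    using assms by (intro divide_strict_right_mono) auto
  then have "\<gamma> / x < N / D"
    using \<open>0 < D\<close> assms by simp
  moreover have "m * ((1 + x) powr (m - 1) - (1 - x) powr (m - 1)) / ((1 + x) powr m + (1 - x) powr m)
      = m * (N / D)"
    using assms powr_split_two[of "1 + x" m] powr_split_two[of "1 - x" m]
    by (simp add: N_def D_def A_def B_def)
  moreover have "m * (\<gamma> / x) < m * (N / D)"
    using \<open>\<gamma> / x < N / D\<close> assms by (intro mult_strict_left_mono) auto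
  ultimately show ?thesis
    by (intro divide_pos_pos) auto
qed

lemma Fobj_strict_mono_near_one:
  fixes m \<gamma> c x y :: real
  assumes "2 \<le> m" "0 < \<gamma>" "0 < c" "\<gamma> * (1 + c\<^sup>2) < c\<^sup>2" "c \<le> x" "x < y" "y < 1"
  shows "Fobj m \<gamma> x < Fobj m \<gamma> y"
proof (rule DERIV_pos_imp_increasing[OF \<open>x < y\<close>])
  fix z assume z: "x \<le> z" "z \<le> y"
  have "c\<^sup>2 \<le> z\<^sup>2"
    using assms z by (intro power_mono) auto
  moreover have "\<gamma> < 1"
    using assms mult_right_mono[of 1 \<gamma> "1 + c\<^sup>2"] by (smt (verit) zero_le_power2)
  ultimately have "(\<gamma> - 1) * (z\<^sup>2 - c\<^sup>2) \<le> 0"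
    by (intro mult_nonpos_nonneg) auto
  then have "\<gamma> * (1 + z\<^sup>2) < z\<^sup>2"
    using assms by (simp add: algebra_simps)
  moreover have "0 < z" "z < 1"
    using assms z by auto
  ultimately show "\<exists>D. (Fobj m \<gamma> has_real_derivative D) (at z) \<and> 0 < D"
    using Fobj_has_real_derivative Fobj_deriv_pos assms by blast
qed

lemma Fobj_ge_neg_log:
  assumes "0 \<le> m" "0 < x"
  shows "- m * \<gamma> * log 2 x - 1 \<le> Fobj m \<gamma> x"
proof -
  have "1 \<le> (1 + x) powr m"
    using assms by (intro ge_one_powr_ge_zero) auto
  then have "0 \<le> log 2 ((1 + x) powr m + (1 - x) powr m)"
    by (smt (verit) powr_ge_zero zero_le_log_cancel_iff)
  then show ?thesis
    unfolding Fobj_def by simp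
qed

lemma Fobj_large_near_zero:
  fixes m \<gamma> B :: real
  assumes "0 < m" "0 < \<gamma>"
  obtains d where "0 < d" "\<And>x. 0 < x \<Longrightarrow> x \<le> d \<Longrightarrow> B < Fobj m \<gamma> x"
proof
  define d where "d = 2 powr (- (\<bar>B\<bar> + 2) / (m * \<gamma>))"
  show "0 < d"
    by (simp add: d_def)
  fix x :: real
  assume x: "0 < x" "x \<le> d"
  then have "log 2 x \<le> - (\<bar>B\<bar> + 2) / (m * \<gamma>)"
    by (simp add: d_def log_le_iff)
  then have "\<bar>B\<bar> + 2 \<le> - m * \<gamma> * log 2 x"
    using assms by (simp add: field_simps)
  with Fobj_ge_neg_log[of m x \<gamma>] assms x show "B < Fobj m \<gamma> x"
    by simp
qed

lemma exists_threshold_below_one: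
  fixes \<gamma> :: real
  assumes "0 < \<gamma>" "\<gamma> < 1/2"
  obtains c where "0 < c" "c < 1" "\<gamma> * (1 + c\<^sup>2) < c\<^sup>2"
proof -
  define k where "k = \<gamma> / (1 - \<gamma>)"
  define c where "c = (1 + k) / 2"
  have k: "0 < k" "k < 1"
    using assms by (auto simp: k_def field_simps)
  have "0 < (1 - k)\<^sup>2"
    using k by simp
  then have "k < c\<^sup>2"
    by (simp add: c_def power2_eq_square field_simps)
  then have "\<gamma> * (1 + c\<^sup>2) < c\<^sup>2"
    using assms by (simp add: k_def field_simps)
  moreover have "0 < c" "c < 1"
    using k by (auto simp: c_def)
  ultimately show ?thesis
    using that by blast
qed

lemma Fobj_attains_min:
  fixes m \<gamma> :: real
  assumes "2 \<le> m" "0 < \<gamma>" "\<gamma> < 1/2"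
  obtains x0 where "x0 \<in> {0<..<1}" "\<And>x. x \<in> {0<..<1} \<Longrightarrow> Fobj m \<gamma> x0 \<le> Fobj m \<gamma> x"
proof -
  obtain c where c: "0 < c" "c < 1" "\<gamma> * (1 + c\<^sup>2) < c\<^sup>2"
    using exists_threshold_below_one assms(2,3) by blast
  obtain d0 where d0: "0 < d0" "\<And>x. 0 < x \<Longrightarrow> x \<le> d0 \<Longrightarrow> Fobj m \<gamma> c < Fobj m \<gamma> x"
    using Fobj_large_near_zero[of m \<gamma> "Fobj m \<gamma> c"] assms by auto
  define d where "d = min d0 (c / 2)"
  have d: "0 < d" "d < c"
    using c d0 by (auto simp: d_def)
  have "continuous_on {d..c} (Fobj m \<gamma>)"
  proof (intro continuous_at_imp_continuous_on ballI)
    fix x assume "x \<in> {d..c}"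
    then show "isCont (Fobj m \<gamma>) x"
      using Fobj_has_real_derivative[of x m \<gamma>] d c by (auto dest: DERIV_isCont)
  qed
  then obtain x0 where x0: "x0 \<in> {d..c}" "\<And>y. y \<in> {d..c} \<Longrightarrow> Fobj m \<gamma> x0 \<le> Fobj m \<gamma> y"
    using continuous_attains_inf[of "{d..c}" "Fobj m \<gamma>"] d by auto
  show ?thesis
  proof (rule that)
    show "x0 \<in> {0<..<1}"
      using x0 d c by auto
    fix x :: real assume x: "x \<in> {0<..<1}"
    consider "x \<le> d" | "x \<in> {d..c}" | "c < x" by fastforce
    then show "Fobj m \<gamma> x0 \<le> Fobj m \<gamma> x"
    proof cases
      case 1
      then show ?thesis using d0(2)[of x] x0(2)[of c] x d by (auto simp: d_def)
    next
      case 2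
      then show ?thesis using x0 by blast
    next
      case 3
      then show ?thesis
        using Fobj_strict_mono_near_one[OF assms(1,2) c(1,3) order_refl, of x] x0(2)[of c] x d
        by auto
    qed
  qed
qed

lemma F_attained:
  fixes m \<gamma> :: real
  assumes "2 \<le> m" "0 < \<gamma>" "\<gamma> < 1/2"
  obtains x0 where "x0 \<in> {0<..<1}" "F m \<gamma> = Fobj m \<gamma> x0"
    and "\<And>x. x \<in> {0<..<1} \<Longrightarrow> F m \<gamma> \<le> Fobj m \<gamma> x"
proof -
  obtain x0 where x0: "x0 \<in> {0<..<1}" "\<And>x. x \<in> {0<..<1} \<Longrightarrow> Fobj m \<gamma> x0 \<le> Fobj m \<gamma> x"
    using Fobj_attains_min[OF assms] by blast
  then have "F m \<gamma> = Fobj m \<gamma> x0"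
    unfolding F_def by (intro cInf_eq_minimum) auto
  with x0 show ?thesis
    using that by auto
qed

lemma Fobj_exp_eq_perspective_lse:
  assumes "0 < m" "v < 0"
  shows "Fobj m \<gamma> (exp (v / m)) = (perspective_lse m v - \<gamma> * v) / ln 2 - 1"
proof -
  have "v / m < 0"
    using assms by (simp add: divide_neg_pos)
  then show ?thesis
    using assms
    by (simp add: Fobj_def perspective_lse_def exp_perspective_log1pexp exp_perspective_log1mexp
        log_def diff_divide_distrib)
qed

lemma Fobj_exp_strict_convex_combination:
  fixes m1 m2 v1 v2 u :: real
  assumes m: "2 \<le> m1" "2 \<le> m2" "m1 \<noteq> m2" and v: "v1 < 0" "v2 < 0" and u: "0 < u" "u < 1"
  shows "Fobj (u * m1 + (1 - u) * m2) \<gamma> (exp ((u * v1 + (1 - u) * v2) / (u * m1 + (1 - u) * m2)))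
    < u * Fobj m1 \<gamma> (exp (v1 / m1)) + (1 - u) * Fobj m2 \<gamma> (exp (v2 / m2))"
proof -
  have "u * 2 + (1 - u) * 2 \<le> u * m1 + (1 - u) * m2"
    using m u by (intro add_mono mult_left_mono) auto
  moreover have "u * v1 + (1 - u) * v2 < 0"
    using v u by (smt (verit) mult_pos_neg)
  moreover have "perspective_lse (u * m1 + (1 - u) * m2) (u * v1 + (1 - u) * v2)
      < u * perspective_lse m1 v1 + (1 - u) * perspective_lse m2 v2"
    using perspective_lse_line_strict_chord[of m2 "m1 - m2" v2 "v1 - v2" u] m v u
    by (simp add: algebra_simps)
  ultimately show ?thesis
    using m v by (simp add: Fobj_exp_eq_perspective_lse divide_strict_right_mono algebra_simps
        flip: add_divide_distrib diff_divide_distrib)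
qed

theorem mainTheorem16:
  fixes \<gamma> :: real
  assumes "0 < \<gamma>" and "\<gamma> < 1/2"
  shows "strictly_convex_on {2..} (\<lambda>m. F m \<gamma>)"
proof (rule strictly_convex_on_partial_minimization[where g = "\<lambda>m v. Fobj m \<gamma> (exp (v / m))"
      and V = "{..<0}"])
  fix m :: real assume "m \<in> {2..}"
  then obtain x0 where x0: "x0 \<in> {0<..<1}" "F m \<gamma> = Fobj m \<gamma> x0"
    and below: "\<And>x. x \<in> {0<..<1} \<Longrightarrow> F m \<gamma> \<le> Fobj m \<gamma> x"
    using F_attained assms by auto
  show "\<exists>v\<in>{..<0}. F m \<gamma> = Fobj m \<gamma> (exp (v / m))"
    using x0 \<open>m \<in> {2..}\<close> by (intro bexI[of _ "m * ln x0"]) (auto intro: mult_pos_neg)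
  show "F m \<gamma> \<le> Fobj m \<gamma> (exp (v / m))" if "v \<in> {..<0}" for v
    using that \<open>m \<in> {2..}\<close> by (intro below) (auto simp: divide_neg_pos)
next
  fix m1 m2 v1 v2 u :: real
  assume "m1 \<in> {2..}" "m2 \<in> {2..}" "v1 \<in> {..<0}" "v2 \<in> {..<0}" "m1 \<noteq> m2" "0 < u" "u < 1"
  then show "Fobj (u * m1 + (1 - u) * m2) \<gamma> (exp ((u * v1 + (1 - u) * v2) / (u * m1 + (1 - u) * m2)))
    < u * Fobj m1 \<gamma> (exp (v1 / m1)) + (1 - u) * Fobj m2 \<gamma> (exp (v2 / m2))"
    by (intro Fobj_exp_strict_convex_combination) auto
qed (simp_all add: convex_real_interval)

end
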